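(* Let $H$ be a complex Hadamard matrix of order $n$, and let $T$ be a trade in $H$. Then $|T|\ge n$.
   Context: A complex Hadamard matrix of order $n$ is an $n\times n$ matrix with all entries of modulus $1$ and $HH^{\ast}=nI_n$. A trade in $H$ is a nonempty set $T$ of positions (entries) of $H$ which can be altered to obtain a different complex Hadamard matrix, i.e. there is a complex Hadamard matrix $K$ of order $n$ with $K_{ij}\neq H_{ij}$ for $(i,j)\in T$ and $K_{ij}=H_{ij}$ for $(i,j)\notin T$. The size of $T$ is its number of entries $|T|$. *)

theory Defs
  imports Complex_Main
begin

text \<open>Matrices of order n are represented as functions nat => nat => complex,
  only the entries with indices i < n, j < n being relevant.\<close>

definition complex_hadamard :: "nat \<Rightarrow> (nat \<Rightarrow> nat \<Rightarrow> complex) \<Rightarrow> bool" where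
  "complex_hadamard n H \<longleftrightarrow>
     (\<forall>i<n. \<forall>j<n. norm (H i j) = 1) \<and>
     (\<forall>i<n. \<forall>k<n. (\<Sum>j<n. H i j * cnj (H k j)) = (if i = k then of_nat n else 0))"

definition is_trade :: "nat \<Rightarrow> (nat \<Rightarrow> nat \<Rightarrow> complex) \<Rightarrow> (nat \<times> nat) set \<Rightarrow> bool" where
  "is_trade n H T \<longleftrightarrow>
     T \<noteq> {} \<and> T \<subseteq> {..<n} \<times> {..<n} \<and>
     (\<exists>K. complex_hadamard n K \<and>
        (\<forall>i<n. \<forall>j<n. ((i, j) \<in> T \<longrightarrow> K i j \<noteq> H i j) \<and>
                       ((i, j) \<notin> T \<longrightarrow> K i j = H i j)))"

end

theory Submission
  imports Defs "Jordan_Normal_Form.Determinant" "HOL-Analysis.Convex"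
begin

text \<open>Let \<open>K\<close> be the Hadamard matrix obtained by altering \<open>H\<close> on \<open>T\<close>, let \<open>R\<close> be the set of
  rows met by \<open>T\<close> and \<open>S\<^sub>i\<close> the positions of \<open>T\<close> in row \<open>i\<close>. For \<open>i \<in> R\<close> the difference
  \<open>d = K\<^sub>i - H\<^sub>i\<close> is orthogonal to every row \<open>H\<^sub>k = K\<^sub>k\<close> with \<open>k \<notin> R\<close>, so its expansion in the
  (orthogonal) rows of \<open>H\<close> is supported on \<open>R\<close>. The uncertainty principle for Hadamard matrices,
  a consequence of Parseval's identity and Cauchy-Schwarz, then gives \<open>n \<le> |S\<^sub>i| |R|\<close>; summing
  over \<open>i \<in> R\<close> yields \<open>n |R| \<le> |T| |R|\<close>.\<close>

definition hadamard_transform ::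
    "nat \<Rightarrow> (nat \<Rightarrow> nat \<Rightarrow> complex) \<Rightarrow> (nat \<Rightarrow> complex) \<Rightarrow> nat \<Rightarrow> complex" where
  "hadamard_transform n H d k = (\<Sum>j<n. d j * cnj (H k j))"

lemma complex_hadamard_norm_entry:
  assumes "complex_hadamard n H" "i < n" "j < n"
  shows "norm (H i j) = 1"
  using assms unfolding complex_hadamard_def by blast

lemma complex_hadamard_rows_orthogonal:
  assumes "complex_hadamard n H" "i < n" "k < n"
  shows "(\<Sum>j<n. H i j * cnj (H k j)) = (if i = k then of_nat n else 0)"
  using assms unfolding complex_hadamard_def by blast

text \<open>\<open>H H\<^sup>* = n I\<close> makes \<open>H\<^sup>* / n\<close> a right and hence a left inverse of \<open>H\<close>.\<close>

lemma complex_hadamard_columns_orthogonal: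
  assumes H: "complex_hadamard n H" and "i < n" "l < n"
  shows "(\<Sum>k<n. cnj (H k i) * H k l) = (if i = l then of_nat n else 0)"
proof -
  have n_pos: "n > 0" using \<open>i < n\<close> by simp
  define A where "A = mat n n (\<lambda>(i, j). H i j)"
  define B where "B = mat n n (\<lambda>(i, j). cnj (H j i) / of_nat n)"
  have "A * B = 1\<^sub>m n"
  proof (rule eq_matI)
    fix a b assume "a < dim_row (1\<^sub>m n)" "b < dim_col (1\<^sub>m n :: complex mat)"
    then show "(A * B) $$ (a, b) = 1\<^sub>m n $$ (a, b)"
      using n_pos complex_hadamard_rows_orthogonal[OF H]
      by (simp add: A_def B_def scalar_prod_def atLeast0LessThan flip: sum_divide_distrib)
  qed (auto simp: A_def B_def)
  then have "B * A = 1\<^sub>m n"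
    by (rule mat_mult_left_right_inverse[rotated 2]) (auto simp: A_def B_def)
  then have "(B * A) $$ (i, l) = 1\<^sub>m n $$ (i, l)" by simp
  then have "(\<Sum>k<n. cnj (H k i) * H k l) / of_nat n = (if i = l then 1 else 0)"
    using assms by (simp add: A_def B_def scalar_prod_def atLeast0LessThan flip: sum_divide_distrib)
  then show ?thesis using n_pos by (auto simp: field_simps split: if_splits)
qed

lemma hadamard_transform_parseval:
  assumes H: "complex_hadamard n H"
  shows "(\<Sum>k<n. (norm (hadamard_transform n H d k))\<^sup>2) = real n * (\<Sum>j<n. (norm (d j))\<^sup>2)"
proof -
  have "(\<Sum>k<n. hadamard_transform n H d k * cnj (hadamard_transform n H d k))
      = (\<Sum>k<n. \<Sum>j<n. \<Sum>l<n. d j * cnj (d l) * (cnj (H k j) * H k l))"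
    by (simp add: hadamard_transform_def sum_product mult_ac)
  also have "\<dots> = (\<Sum>j<n. \<Sum>l<n. \<Sum>k<n. d j * cnj (d l) * (cnj (H k j) * H k l))"
    by (subst sum.swap) (rule sum.cong[OF refl], rule sum.swap)
  also have "\<dots> = (\<Sum>j<n. \<Sum>l<n. d j * cnj (d l) * (\<Sum>k<n. cnj (H k j) * H k l))"
    by (simp only: sum_distrib_left)
  also have "\<dots> = (\<Sum>j<n. \<Sum>l<n. if l = j then d j * cnj (d j) * of_nat n else 0)"
    by (intro sum.cong refl) (simp add: complex_hadamard_columns_orthogonal[OF H])
  also have "\<dots> = of_nat n * (\<Sum>j<n. d j * cnj (d j))"
    by (simp add: sum_distrib_left algebra_simps)
  finally have "complex_of_real (\<Sum>k<n. (norm (hadamard_transform n H d k))\<^sup>2)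
      = complex_of_real (real n * (\<Sum>j<n. (norm (d j))\<^sup>2))"
    by (simp add: complex_norm_square sum_distrib_left del: of_real_power)
  then show ?thesis by (rule of_real_eq_iff[THEN iffD1])
qed

lemma hadamard_transform_bound:
  assumes H: "complex_hadamard n H" and "k < n"
  shows "(norm (hadamard_transform n H d k))\<^sup>2
    \<le> real (card {j. j < n \<and> d j \<noteq> 0}) * (\<Sum>j<n. (norm (d j))\<^sup>2)"
proof -
  define S where "S = {j. j < n \<and> d j \<noteq> 0}"
  have "hadamard_transform n H d k = (\<Sum>j\<in>S. d j * cnj (H k j))"
    unfolding hadamard_transform_def S_def by (rule sum.mono_neutral_right) auto
  then have "norm (hadamard_transform n H d k) \<le> (\<Sum>j\<in>S. norm (d j * cnj (H k j)))"
    by (simp add: norm_sum)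
  also have "\<dots> = (\<Sum>j\<in>S. norm (d j))"
    by (intro sum.cong refl) (simp add: S_def norm_mult complex_hadamard_norm_entry[OF H \<open>k < n\<close>])
  finally have "(norm (hadamard_transform n H d k))\<^sup>2 \<le> (\<Sum>j\<in>S. norm (d j))\<^sup>2"
    by (simp add: power_mono)
  also have "\<dots> \<le> (\<Sum>j\<in>S. (norm (d j))\<^sup>2) * real (card S)"
    by (rule sum_squared_le_sum_of_squares)
  also have "(\<Sum>j\<in>S. (norm (d j))\<^sup>2) = (\<Sum>j<n. (norm (d j))\<^sup>2)"
    unfolding S_def by (rule sum.mono_neutral_left) auto
  finally show ?thesis by (simp add: S_def mult.commute)
qed

lemma hadamard_uncertainty:
  assumes H: "complex_hadamard n H" and "j0 < n" "d j0 \<noteq> 0"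
  shows "n \<le> card {j. j < n \<and> d j \<noteq> 0} * card {k. k < n \<and> hadamard_transform n H d k \<noteq> 0}"
proof -
  define N where "N = (\<Sum>j<n. (norm (d j))\<^sup>2)"
  define Q where "Q = {k. k < n \<and> hadamard_transform n H d k \<noteq> 0}"
  have "0 < (norm (d j0))\<^sup>2" using \<open>d j0 \<noteq> 0\<close> by simp
  also have "\<dots> \<le> N"
    unfolding N_def by (rule member_le_sum) (use \<open>j0 < n\<close> in auto)
  finally have "N > 0" .
  have "real n * N = (\<Sum>k\<in>Q. (norm (hadamard_transform n H d k))\<^sup>2)"
    unfolding N_def hadamard_transform_parseval[OF H, symmetric] Q_def
    by (rule sum.mono_neutral_right) auto
  also have "\<dots> \<le> (\<Sum>k\<in>Q. real (card {j. j < n \<and> d j \<noteq> 0}) * N)"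
    unfolding N_def by (rule sum_mono) (simp add: Q_def hadamard_transform_bound[OF H])
  also have "\<dots> = real (card {j. j < n \<and> d j \<noteq> 0} * card Q) * N" by simp
  finally have "n \<le> card {j. j < n \<and> d j \<noteq> 0} * card Q"
    using \<open>N > 0\<close> by (simp only: mult_le_cancel_right_pos of_nat_le_iff)
  then show ?thesis by (simp add: Q_def)
qed

lemma hadamard_transform_row_difference:
  assumes H: "complex_hadamard n H" and K: "complex_hadamard n K"
    and "i < n" "k < n" "i \<noteq> k" and "\<And>j. j < n \<Longrightarrow> K k j = H k j"
  shows "hadamard_transform n H (\<lambda>j. K i j - H i j) k = 0"
proof -
  have "hadamard_transform n H (\<lambda>j. K i j - H i j) k
      = (\<Sum>j<n. K i j * cnj (K k j)) - (\<Sum>j<n. H i j * cnj (H k j))"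
    using assms(6) by (simp add: hadamard_transform_def algebra_simps sum_subtractf)
  then show ?thesis
    using assms(3-5) complex_hadamard_rows_orthogonal[OF H] complex_hadamard_rows_orthogonal[OF K]
    by simp
qed

lemma is_trade_finite: "is_trade n H T \<Longrightarrow> finite T"
  unfolding is_trade_def using finite_subset by blast

lemma trade_row_bound:
  assumes H: "complex_hadamard n H" and T: "is_trade n H T" and "(i, j0) \<in> T"
  shows "n \<le> card {j. (i, j) \<in> T} * card (fst ` T)"
proof -
  obtain K where K: "complex_hadamard n K" and T_sub: "T \<subseteq> {..<n} \<times> {..<n}" and
    KT: "\<forall>i<n. \<forall>j<n. ((i, j) \<in> T \<longrightarrow> K i j \<noteq> H i j) \<and> ((i, j) \<notin> T \<longrightarrow> K i j = H i j)"
    using T unfolding is_trade_def by blast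
  define d where "d j = K i j - H i j" for j
  have "i < n" "j0 < n" using \<open>(i, j0) \<in> T\<close> T_sub by auto
  have row_support: "{j. j < n \<and> d j \<noteq> 0} = {j. (i, j) \<in> T}"
    using KT \<open>i < n\<close> T_sub by (auto simp: d_def)
  have "hadamard_transform n H d k = 0" if "k < n" "k \<notin> fst ` T" for k
  proof -
    have "k \<noteq> i" using that \<open>(i, j0) \<in> T\<close> by force
    moreover have "(k, j) \<notin> T" for j using that by force
    ultimately show ?thesis
      unfolding d_def using KT \<open>k < n\<close> by (intro hadamard_transform_row_difference[OF H K \<open>i < n\<close> \<open>k < n\<close>]) auto
  qed
  then have "{k. k < n \<and> hadamard_transform n H d k \<noteq> 0} \<subseteq> fst ` T" by blast
  then have transform_support:
      "card {k. k < n \<and> hadamard_transform n H d k \<noteq> 0} \<le> card (fst ` T)"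
    using is_trade_finite[OF T] by (simp add: card_mono)
  have "d j0 \<noteq> 0" using KT \<open>i < n\<close> \<open>j0 < n\<close> \<open>(i, j0) \<in> T\<close> by (simp add: d_def)
  have "n \<le> card {j. (i, j) \<in> T} * card {k. k < n \<and> hadamard_transform n H d k \<noteq> 0}"
    using hadamard_uncertainty[where d = d, OF H \<open>j0 < n\<close> \<open>d j0 \<noteq> 0\<close>] by (simp only: row_support)
  also have "\<dots> \<le> card {j. (i, j) \<in> T} * card (fst ` T)"
    using transform_support by (rule mult_le_mono2)
  finally show ?thesis .
qed

theorem theorem7p3:
  fixes n :: nat and H :: "nat \<Rightarrow> nat \<Rightarrow> complex" and T :: "(nat \<times> nat) set"
  assumes "complex_hadamard n H"
    and "is_trade n H T"
  shows "card T \<ge> n"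
proof -
  define R where "R = fst ` T"
  have "finite T" using is_trade_finite[OF assms(2)] .
  moreover have "T \<noteq> {}" using assms(2) unfolding is_trade_def by blast
  ultimately have "finite R" "card R > 0" by (auto simp: R_def card_gt_0_iff)
  have rows_finite: "finite {j. (i, j) \<in> T}" for i
    by (rule finite_subset[OF _ finite_imageI[OF \<open>finite T\<close>, of snd]]) force
  have "n * card R = (\<Sum>i\<in>R. n)" by simp
  also have "\<dots> \<le> (\<Sum>i\<in>R. card {j. (i, j) \<in> T} * card R)"
    using trade_row_bound[OF assms] by (intro sum_mono) (auto simp: R_def)
  also have "\<dots> = card (SIGMA i:R. {j. (i, j) \<in> T}) * card R"
    using \<open>finite R\<close> by (simp add: card_SigmaI rows_finite sum_distrib_right)
  also have "(SIGMA i:R. {j. (i, j) \<in> T}) = T" by (force simp: R_def)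
  finally show ?thesis using \<open>card R > 0\<close> by simp
qed

end
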